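(* Let $C$ be an $m\times n$ maximal configuration resistant to predators, with $m\ge 2$. If row $m-1$ (the penultimate row) contains exactly $r$ occupied lots, then every row $i$ with $1\le i\le m-2$ contains at most $r+1$ occupied lots.
   Context: An $m\times n$ configuration is a $0$-$1$ matrix $C=(C_{i,j})$, $1\le i\le m$, $1\le j\le n$; $C_{i,j}=1$ means lot $(i,j)$ is occupied by a house. Row $1$ is the northernmost and row $m$ the southernmost; column $1$ is westernmost and column $n$ easternmost. A house at $(i,j)$ is blocked from sunlight if the three lots $(i,j-1)$, $(i,j+1)$, $(i+1,j)$ all lie inside the grid and are all occupied (lots outside the grid never obstruct sunlight). $C$ is permissible if no house is blocked, and maximal if it is permissible and setting any single empty lot to $1$ yields a non-permissible configuration. A maximal configuration is resistant to predators if, for every empty lot, putting a house on it (alone) results in that new house being blocked. *)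

theory Defs
  imports Main
begin

text \<open>An m x n configuration is modelled as C :: nat => nat => bool, where C i j means
  lot (i,j) is occupied; only the values with 1 <= i <= m, 1 <= j <= n are relevant.\<close>

definition in_grid :: "nat \<Rightarrow> nat \<Rightarrow> nat \<Rightarrow> nat \<Rightarrow> bool" where
  "in_grid m n i j \<longleftrightarrow> 1 \<le> i \<and> i \<le> m \<and> 1 \<le> j \<and> j \<le> n"

definition blocked :: "nat \<Rightarrow> nat \<Rightarrow> (nat \<Rightarrow> nat \<Rightarrow> bool) \<Rightarrow> nat \<Rightarrow> nat \<Rightarrow> bool" where
  "blocked m n C i j \<longleftrightarrow>
     in_grid m n i (j - 1) \<and> j \<ge> 2 \<and> in_grid m n i (j + 1) \<and> in_grid m n (i + 1) j \<and>
     C i (j - 1) \<and> C i (j + 1) \<and> C (i + 1) j"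

definition permissible :: "nat \<Rightarrow> nat \<Rightarrow> (nat \<Rightarrow> nat \<Rightarrow> bool) \<Rightarrow> bool" where
  "permissible m n C \<longleftrightarrow> (\<forall>i j. in_grid m n i j \<and> C i j \<longrightarrow> \<not> blocked m n C i j)"

definition add_house :: "(nat \<Rightarrow> nat \<Rightarrow> bool) \<Rightarrow> nat \<Rightarrow> nat \<Rightarrow> (nat \<Rightarrow> nat \<Rightarrow> bool)" where
  "add_house C i j = (\<lambda>a b. if a = i \<and> b = j then True else C a b)"

definition maximal :: "nat \<Rightarrow> nat \<Rightarrow> (nat \<Rightarrow> nat \<Rightarrow> bool) \<Rightarrow> bool" where
  "maximal m n C \<longleftrightarrow> permissible m n C \<and>
     (\<forall>i j. in_grid m n i j \<and> \<not> C i j \<longrightarrow> \<not> permissible m n (add_house C i j))"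

definition resistant :: "nat \<Rightarrow> nat \<Rightarrow> (nat \<Rightarrow> nat \<Rightarrow> bool) \<Rightarrow> bool" where
  "resistant m n C \<longleftrightarrow> maximal m n C \<and>
     (\<forall>i j. in_grid m n i j \<and> \<not> C i j \<longrightarrow> blocked m n (add_house C i j) i j)"

definition row_count :: "nat \<Rightarrow> (nat \<Rightarrow> nat \<Rightarrow> bool) \<Rightarrow> nat \<Rightarrow> nat" where
  "row_count n C i = card {j \<in> {1..n}. C i j}"

end

theory Submission
  imports Defs
begin

(* In a resistant configuration an empty lot has occupied lots to its west, east and south,
   while permissibility forbids an occupied lot below three consecutive occupied lots.  Hence
   between any two empty lots of row i+1 there is an empty lot of row i: the empty lots of
   consecutive rows interlace, and row i+1 has at most one more empty lot than row i.  To
   iterate this down to row m-1 one uses the potential |empty lots of row i| + [lots 2 and n-1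
   of row i are occupied], which does not increase from row to row. *)

lemma card_le_Suc_card_if_separating:
  fixes W Z :: "'a::linorder set"
  assumes "finite Z"
    and separating: "\<And>j k. j \<in> W \<Longrightarrow> k \<in> W \<Longrightarrow> j < k \<Longrightarrow> \<exists>x\<in>Z. j < x \<and> x < k"
  shows "card W \<le> card Z + 1"
proof -
  define rank where "rank j = card {x \<in> Z. x < j}" for j
  have "strict_mono_on W rank"
  proof (rule strict_mono_onI)
    fix j k assume "j \<in> W" "k \<in> W" "j < k"
    then obtain x where "x \<in> Z" "j < x" "x < k" using separating by blast
    have "{y \<in> Z. y < j} \<subseteq> {y \<in> Z. y < k}" using \<open>j < k\<close> by (blast intro: less_trans)
    moreover have "x \<in> {y \<in> Z. y < k} - {y \<in> Z. y < j}" using \<open>x \<in> Z\<close> \<open>j < x\<close> \<open>x < k\<close> by auto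
    ultimately have "{y \<in> Z. y < j} \<subset> {y \<in> Z. y < k}" by blast
    then show "rank j < rank k" unfolding rank_def using \<open>finite Z\<close> by (simp add: psubset_card_mono)
  qed
  then have "inj_on rank W" by (rule strict_mono_on_imp_inj_on)
  moreover have "rank ` W \<subseteq> {0..card Z}"
    unfolding rank_def using \<open>finite Z\<close> by (auto intro: card_mono)
  ultimately have "card W \<le> card {0..card Z}" by (rule card_inj_on_le) simp
  then show ?thesis by simp
qed

lemma permissible_not_below_three:
  assumes "permissible m n C" "1 \<le> i" "i + 1 \<le> m" "2 \<le> j" "j + 1 \<le> n"
    and "C i (j - 1)" "C i j" "C i (j + 1)"
  shows "\<not> C (i + 1) j"
  using assms unfolding permissible_def blocked_def in_grid_def by auto

lemma permissible_empty_between: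
  assumes "permissible m n C" "1 \<le> i" "i + 1 \<le> m" "1 \<le> j" "j + 2 \<le> k" "k \<le> n"
    and "C i j" "C i k" "C (i + 1) (j + 1)"
  shows "\<exists>x. j < x \<and> x < k \<and> \<not> C i x"
proof (rule ccontr)
  assume "\<not> ?thesis"
  then have "C i (j + 1)" "C i (j + 2)" using assms(5,8) by (auto simp: le_less)
  then show False using permissible_not_below_three[of m n C i "j + 1"] assms by auto
qed

definition empty_lots :: "nat \<Rightarrow> (nat \<Rightarrow> nat \<Rightarrow> bool) \<Rightarrow> nat \<Rightarrow> nat set" where
  "empty_lots n C i = {j \<in> {1..n}. \<not> C i j}"

text \<open>An occupied lot 2 (n - 1) forces an empty lot in the row above to the left (right) of
  all empty lots of this row; columns 1 and n, which are never empty, stand in for it.\<close>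

definition extended_empty_lots :: "nat \<Rightarrow> (nat \<Rightarrow> nat \<Rightarrow> bool) \<Rightarrow> nat \<Rightarrow> nat set" where
  "extended_empty_lots n C i =
     empty_lots n C i \<union> (if C i 2 then {1} else {}) \<union> (if C i (n - 1) then {n} else {})"

definition row_potential :: "nat \<Rightarrow> (nat \<Rightarrow> nat \<Rightarrow> bool) \<Rightarrow> nat \<Rightarrow> nat" where
  "row_potential n C i = card (empty_lots n C i) + (if C i 2 \<and> C i (n - 1) then 1 else 0)"

lemma row_count_add_card_empty_lots: "row_count n C i + card (empty_lots n C i) = n"
proof -
  have "{1..n} = {j \<in> {1..n}. C i j} \<union> empty_lots n C i"
    and "{j \<in> {1..n}. C i j} \<inter> empty_lots n C i = {}"
    unfolding empty_lots_def by auto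
  then have "card {1..n} = row_count n C i + card (empty_lots n C i)"
    unfolding row_count_def by (metis card_Un_disjoint finite_Un finite_atLeastAtMost)
  then show ?thesis by simp
qed

lemma resistant_empty_lotsD:
  assumes "resistant m n C" "1 \<le> i" "i \<le> m" "j \<in> empty_lots n C i"
  shows "2 \<le> j" "j + 1 \<le> n" "i + 1 \<le> m" "C i (j - 1)" "C i (j + 1)" "C (i + 1) j"
proof -
  have "blocked m n (add_house C i j) i j"
    using assms unfolding resistant_def empty_lots_def in_grid_def by auto
  then show "2 \<le> j" "j + 1 \<le> n" "i + 1 \<le> m" "C i (j - 1)" "C i (j + 1)" "C (i + 1) j"
    unfolding blocked_def add_house_def in_grid_def by (auto split: if_split_asm)
qed

lemma resistant_occupied_above_empty:
  assumes "resistant m n C" "1 \<le> i" "i + 1 \<le> m" "j \<in> empty_lots n C (i + 1)"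
  shows "C i j"
proof (rule ccontr)
  assume "\<not> C i j"
  then have "j \<in> empty_lots n C i" using assms(4) unfolding empty_lots_def by simp
  then have "C (i + 1) j" using resistant_empty_lotsD(6)[OF assms(1,2)] assms(3) by simp
  then show False using assms(4) unfolding empty_lots_def by simp
qed

lemma resistant_occupied_border:
  assumes "resistant m n C" "1 \<le> i" "i \<le> m" "j \<in> {1, n}" "1 \<le> n"
  shows "C i j"
proof (rule ccontr)
  assume "\<not> C i j"
  then have "j \<in> empty_lots n C i" using assms(4,5) unfolding empty_lots_def by auto
  from resistant_empty_lotsD(1,2)[OF assms(1-3) this] show False using assms(4) by auto
qed

lemma resistant_card_extended_empty_lots:
  assumes "resistant m n C" "1 \<le> i" "i \<le> m" "2 \<le> n"
  shows "card (extended_empty_lots n C i)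
    = card (empty_lots n C i) + (if C i 2 then 1 else 0) + (if C i (n - 1) then 1 else 0)"
proof -
  have "1 \<notin> empty_lots n C i" "n \<notin> empty_lots n C i" "finite (empty_lots n C i)"
    using resistant_occupied_border[OF assms(1-3)] assms(4) unfolding empty_lots_def by auto
  then show ?thesis using assms(4) unfolding extended_empty_lots_def by (simp add: card_insert_if)
qed

lemma resistant_extended_empty_lots_separated:
  assumes R: "resistant m n C" and i: "1 \<le> i" "i + 1 \<le> m" and "3 \<le> n"
    and jk: "j \<in> extended_empty_lots n C (i + 1)" "k \<in> extended_empty_lots n C (i + 1)" "j < k"
  shows "\<exists>x\<in>empty_lots n C i. j < x \<and> x < k"
proof -
  let ?W = "extended_empty_lots n C (i + 1)" and ?Z' = "empty_lots n C (i + 1)"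
  have lower_empty: "2 \<le> j \<and> j + 1 \<le> n \<and> \<not> C (i + 1) j \<and> C (i + 1) (j + 1) \<and> C i j"
    if "j \<in> ?Z'" for j
    using that resistant_empty_lotsD[OF R _ _ that] resistant_occupied_above_empty[OF R i that] i
    unfolding empty_lots_def by auto
  have W_cases: "j \<in> ?Z' \<or> j = 1 \<and> C (i + 1) 2 \<or> j = n \<and> C (i + 1) (n - 1)"
    if "j \<in> ?W" for j
    using that unfolding extended_empty_lots_def by (auto split: if_splits)
  have W_row: "1 \<le> j \<and> j \<le> n \<and> C i j" if "j \<in> ?W" for j
    using W_cases[OF that] lower_empty[of j] resistant_occupied_border[OF R, of i j] i \<open>3 \<le> n\<close>
    by auto
  have W_next: "C (i + 1) (j + 1)" if "j \<in> ?W" "j < n" for j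
    using W_cases[OF that(1)] lower_empty[of j] that(2) by (auto simp: numeral_2_eq_2)
  have W_gap: "j + 2 \<le> k"
  proof (rule ccontr)
    assume "\<not> j + 2 \<le> k"
    then have k: "k = j + 1" using \<open>j < k\<close> by simp
    have "C (i + 1) k" using W_next[OF jk(1)] W_row[OF jk(2)] k by simp
    then have "k = n \<and> C (i + 1) j" using W_cases[OF jk(2)] lower_empty[of k] W_row[OF jk(1)] k by auto
    then show False using W_cases[OF jk(1)] lower_empty[of j] k \<open>3 \<le> n\<close> by auto
  qed
  have P: "permissible m n C" using R unfolding resistant_def maximal_def by blast
  have j: "1 \<le> j" "C i j" and k: "k \<le> n" "C i k" using W_row[OF jk(1)] W_row[OF jk(2)] by auto
  have "C (i + 1) (j + 1)" using W_next[OF jk(1)] jk(3) k(1) by simp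
  then obtain x where x: "j < x" "x < k" "\<not> C i x"
    using permissible_empty_between[OF P i j(1) W_gap k(1) j(2) k(2)] by blast
  then have "x \<in> empty_lots n C i" using j(1) k(1) unfolding empty_lots_def by simp
  with x show ?thesis by blast
qed

lemma resistant_row_potential_Suc_le:
  assumes R: "resistant m n C" and i: "1 \<le> i" "i + 1 \<le> m" and "3 \<le> n"
  shows "row_potential n C (i + 1) \<le> row_potential n C i"
proof -
  have "card (extended_empty_lots n C (i + 1)) \<le> card (empty_lots n C i) + 1"
  proof (rule card_le_Suc_card_if_separating)
    show "finite (empty_lots n C i)" by (simp add: empty_lots_def)
  qed (rule resistant_extended_empty_lots_separated[OF assms])
  moreover have "\<not> C i 2 \<Longrightarrow> C (i + 1) 2" "\<not> C i (n - 1) \<Longrightarrow> C (i + 1) (n - 1)"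
    using resistant_empty_lotsD(6)[OF R i(1)] i \<open>3 \<le> n\<close> unfolding empty_lots_def by auto
  ultimately show ?thesis
    using resistant_card_extended_empty_lots[OF R, of "i + 1"] i \<open>3 \<le> n\<close>
    unfolding row_potential_def by (auto split: if_splits)
qed

lemma resistant_row_potential_antimono:
  assumes R: "resistant m n C" and "3 \<le> n" "1 \<le> i" "i \<le> i'" "i' \<le> m"
  shows "row_potential n C i' \<le> row_potential n C i"
  using \<open>i \<le> i'\<close> \<open>i' \<le> m\<close>
proof (induction i' rule: dec_induct)
  case base
  then show ?case by simp
next
  case (step k)
  then have "row_potential n C (k + 1) \<le> row_potential n C k"
    using resistant_row_potential_Suc_le[OF R] \<open>1 \<le> i\<close> \<open>3 \<le> n\<close> by simp
  then show ?case using step by simp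
qed

theorem mainTheorem8:
  fixes m n r :: nat and C :: "nat \<Rightarrow> nat \<Rightarrow> bool"
  assumes "resistant m n C"
    and "m \<ge> 2"
    and "row_count n C (m - 1) = r"
  shows "\<forall>i. 1 \<le> i \<and> i \<le> m - 2 \<longrightarrow> row_count n C i \<le> r + 1"
proof (intro allI impI)
  fix i assume i: "1 \<le> i \<and> i \<le> m - 2"
  have "card (empty_lots n C (m - 1)) \<le> card (empty_lots n C i) + 1"
  proof (cases "3 \<le> n")
    case True
    have "i \<le> m - 1" using i by linarith
    then have "row_potential n C (m - 1) \<le> row_potential n C i"
      using resistant_row_potential_antimono[OF assms(1) True] i by simp
    then show ?thesis unfolding row_potential_def by (auto split: if_splits)
  next
    case False
    then have "empty_lots n C (m - 1) = {}"
      using resistant_empty_lotsD(1,2)[OF assms(1), of "m - 1"] assms(2) by fastforce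
    then show ?thesis by simp
  qed
  then show "row_count n C i \<le> r + 1"
    using row_count_add_card_empty_lots[of n C i] row_count_add_card_empty_lots[of n C "m - 1"]
      assms(3) by linarith
qed

end
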